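(* Let $(X,d_X)$ be a metric space. (i) $X$ has the uniform Stone property if and only if $\Delta_X^{(u)}(r)>0$ for all $r>0$. (ii) $X$ has the coarse Stone property if and only if $\Delta_X^{(c)}(R)<\infty$ for all $R\in[0,\infty)$.
   Context: A family $\mathcal{U}$ of subsets of $X$ with union $X$ is a cover. $\mathrm{diam}(\mathcal{U})=\sup_{U\in\mathcal{U}}\mathrm{diam}(U)$; the Lebesgue number is $\mathcal{L}(\mathcal{U})=\sup\{d\in[0,\infty): \text{every } E\subseteq X \text{ with } \mathrm{diam}(E)<d \text{ is contained in some } U\in\mathcal{U}\}$. $\mathcal{U}$ is uniform if $\mathcal{L}(\mathcal{U})>0$, uniformly bounded if $\mathrm{diam}(\mathcal{U})<\infty$, point-finite if each point lies in only finitely many members. A cover $\mathcal{V}$ refines $\mathcal{U}$ if each $V\in\mathcal{V}$ is contained in some $U\in\mathcal{U}$. $X$ has the uniform Stone property if every uniform cover of $X$ has a point-finite uniform refinement; $X$ has the coarse Stone property if every uniformly bounded cover of $X$ refines a point-finite uniformly bounded cover. $\Delta_X^{(u)}(r)=\sup\{\mathcal{L}(\mathcal{U}): \mathcal{U} \text{ point-finite cover},\ \mathrm{diam}(\mathcal{U})\leq r\}$ and $\Delta_X^{(c)}(R)=\inf\{\mathrm{diam}(\mathcal{U}): \mathcal{U} \text{ point-finite cover},\ \mathcal{L}(\mathcal{U})\geq R\}$. *)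

theory Defs
  imports "HOL-Analysis.Analysis"
begin

text \<open>The metric space X is the whole carrier of a type of class metric_space.
Diameters and Lebesgue numbers take values in the extended reals.\<close>

definition diam :: "'a::metric_space set \<Rightarrow> ereal" where
  "diam E = (if E = {} then 0 else (SUP x\<in>E. SUP y\<in>E. ereal (dist x y)))"

definition is_cover :: "'a set set \<Rightarrow> bool" where
  "is_cover \<U> \<longleftrightarrow> \<Union>\<U> = UNIV"

definition cover_diam :: "'a::metric_space set set \<Rightarrow> ereal" where
  "cover_diam \<U> = (SUP U\<in>\<U>. diam U)"

definition lebesgue_number :: "'a::metric_space set set \<Rightarrow> ereal" where
  "lebesgue_number \<U> = Sup {ereal d | d. d \<ge> 0 \<and>
      (\<forall>E. diam E < ereal d \<longrightarrow> (\<exists>U\<in>\<U>. E \<subseteq> U))}"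

definition uniform_cover :: "'a::metric_space set set \<Rightarrow> bool" where
  "uniform_cover \<U> \<longleftrightarrow> is_cover \<U> \<and> lebesgue_number \<U> > 0"

definition uniformly_bounded_cover :: "'a::metric_space set set \<Rightarrow> bool" where
  "uniformly_bounded_cover \<U> \<longleftrightarrow> is_cover \<U> \<and> cover_diam \<U> < \<infinity>"

definition point_finite :: "'a set set \<Rightarrow> bool" where
  "point_finite \<U> \<longleftrightarrow> (\<forall>x. finite {U\<in>\<U>. x \<in> U})"

definition refines :: "'a set set \<Rightarrow> 'a set set \<Rightarrow> bool" where
  "refines \<V> \<U> \<longleftrightarrow> (\<forall>V\<in>\<V>. \<exists>U\<in>\<U>. V \<subseteq> U)"

definition uniform_Stone :: "'a::metric_space itself \<Rightarrow> bool" where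
  "uniform_Stone _ \<longleftrightarrow> (\<forall>\<U>::'a set set. uniform_cover \<U> \<longrightarrow>
     (\<exists>\<V>. uniform_cover \<V> \<and> point_finite \<V> \<and> refines \<V> \<U>))"

definition coarse_Stone :: "'a::metric_space itself \<Rightarrow> bool" where
  "coarse_Stone _ \<longleftrightarrow> (\<forall>\<U>::'a set set. uniformly_bounded_cover \<U> \<longrightarrow>
     (\<exists>\<V>. uniformly_bounded_cover \<V> \<and> point_finite \<V> \<and> refines \<U> \<V>))"

definition Delta_u :: "'a::metric_space itself \<Rightarrow> real \<Rightarrow> ereal" where
  "Delta_u _ r = Sup {lebesgue_number \<U> | \<U>::'a set set.
      is_cover \<U> \<and> point_finite \<U> \<and> cover_diam \<U> \<le> ereal r}"

definition Delta_c :: "'a::metric_space itself \<Rightarrow> real \<Rightarrow> ereal" where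
  "Delta_c _ R = Inf {cover_diam \<U> | \<U>::'a set set.
      is_cover \<U> \<and> point_finite \<U> \<and> lebesgue_number \<U> \<ge> ereal R}"

end

theory Submission
  imports Defs
begin

text \<open>Both equivalences compare a cover with the cover of X by closed balls of a fixed radius s,
whose Lebesgue number is at least s and whose diameter is at most 2s. Refinement can only shrink
diameters and only enlarge Lebesgue numbers; conversely a cover whose diameter is smaller than the
Lebesgue number of another one refines it. So a point-finite refinement (coarsening) of the ball
cover witnesses the bound on Delta, and a point-finite cover realising the bound refines (coarsens)
any given cover of the right scale.\<close>

lemma dist_le_diam: "x \<in> E \<Longrightarrow> y \<in> E \<Longrightarrow> ereal (dist x y) \<le> diam (E::'a::metric_space set)"
  unfolding diam_def by (auto intro: SUP_upper2)

lemma diam_nonneg: "0 \<le> diam (E::'a::metric_space set)"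
proof (cases "E = {}")
  case False
  then obtain x where "x \<in> E" by blast
  then have "ereal (dist x x) \<le> diam E" using dist_le_diam by blast
  then show ?thesis by (simp add: zero_ereal_def)
qed (simp add: diam_def)

lemma diam_le:
  assumes "r \<ge> 0" "\<And>x y. x \<in> E \<Longrightarrow> y \<in> E \<Longrightarrow> dist x y \<le> r"
  shows "diam (E::'a::metric_space set) \<le> ereal r"
  unfolding diam_def using assms by (auto intro!: SUP_least)

lemma diam_mono:
  assumes "A \<subseteq> B"
  shows "diam A \<le> diam (B::'a::metric_space set)"
proof (cases "A = {}")
  case False
  have "(SUP x\<in>A. SUP y\<in>A. ereal (dist x y)) \<le> diam B"
    using assms by (intro SUP_least) (auto intro: dist_le_diam)
  then show ?thesis using False by (simp add: diam_def)
qed (use diam_nonneg[of B] in \<open>simp add: diam_def\<close>)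

lemma diam_le_cover_diam: "U \<in> \<U> \<Longrightarrow> diam U \<le> cover_diam \<U>"
  unfolding cover_diam_def by (rule SUP_upper)

lemma cover_diam_le: "(\<And>U. U \<in> \<U> \<Longrightarrow> diam U \<le> c) \<Longrightarrow> cover_diam \<U> \<le> c"
  unfolding cover_diam_def by (rule SUP_least)

lemma lebesgue_number_ge:
  assumes "d \<ge> 0" "\<And>E. diam E < ereal d \<Longrightarrow> \<exists>U\<in>\<U>. E \<subseteq> U"
  shows "ereal d \<le> lebesgue_number \<U>"
  unfolding lebesgue_number_def by (rule Sup_upper) (use assms in auto)

lemma subset_if_diam_less_lebesgue_number:
  assumes "diam E < lebesgue_number \<U>"
  shows "\<exists>U\<in>\<U>. E \<subseteq> U"
  using assms unfolding lebesgue_number_def by (auto simp: less_Sup_iff)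

lemma cover_diam_mono_refines:
  "refines \<V> \<U> \<Longrightarrow> cover_diam \<V> \<le> cover_diam \<U>"
  unfolding refines_def
  by (meson cover_diam_le diam_le_cover_diam diam_mono order_trans)

lemma lebesgue_number_mono_refines:
  assumes "refines \<U> \<V>"
  shows "lebesgue_number \<U> \<le> lebesgue_number \<V>"
  unfolding lebesgue_number_def
proof (rule Sup_subset_mono, safe)
  fix d :: real
  assume "0 \<le> d" and \<U>: "\<forall>E. diam E < ereal d \<longrightarrow> (\<exists>U\<in>\<U>. E \<subseteq> U)"
  have "\<exists>V\<in>\<V>. E \<subseteq> V" if "diam E < ereal d" for E
    using \<U> that assms unfolding refines_def by (meson order_trans)
  with \<open>0 \<le> d\<close> show "\<exists>d'. ereal d = ereal d' \<and> 0 \<le> d' \<and>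
      (\<forall>E. diam E < ereal d' \<longrightarrow> (\<exists>V\<in>\<V>. E \<subseteq> V))"
    by blast
qed

lemma refines_if_cover_diam_less_lebesgue_number:
  "cover_diam \<U> < lebesgue_number \<V> \<Longrightarrow> refines \<U> \<V>"
  unfolding refines_def
  by (meson diam_le_cover_diam le_less_trans subset_if_diam_less_lebesgue_number)

definition cball_cover :: "real \<Rightarrow> 'a::metric_space set set" where
  "cball_cover s = range (\<lambda>x. cball x s)"

lemma is_cover_cball_cover: "s \<ge> 0 \<Longrightarrow> is_cover (cball_cover s)"
  unfolding is_cover_def cball_cover_def by force

lemma lebesgue_number_cball_cover:
  assumes "s \<ge> 0"
  shows "ereal s \<le> lebesgue_number (cball_cover s :: 'a::metric_space set set)"
proof (rule lebesgue_number_ge[OF assms])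
  fix E :: "'a set" assume E: "diam E < ereal s"
  show "\<exists>U\<in>cball_cover s. E \<subseteq> U"
  proof (cases "E = {}")
    case False
    then obtain x where x: "x \<in> E" by blast
    have "E \<subseteq> cball x s"
    proof
      fix y assume "y \<in> E"
      then have "ereal (dist x y) < ereal s"
        using dist_le_diam[OF x] E by (meson le_less_trans)
      then show "y \<in> cball x s" by simp
    qed
    then show ?thesis unfolding cball_cover_def by auto
  qed (auto simp: cball_cover_def)
qed

lemma cover_diam_cball_cover:
  assumes "s \<ge> 0"
  shows "cover_diam (cball_cover s :: 'a::metric_space set set) \<le> ereal (2 * s)"
proof (rule cover_diam_le)
  fix U :: "'a set" assume "U \<in> cball_cover s"
  then obtain x where U: "U = cball x s" unfolding cball_cover_def by auto
  show "diam U \<le> ereal (2 * s)"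
  proof (rule diam_le)
    fix y z assume "y \<in> U" "z \<in> U"
    then show "dist y z \<le> 2 * s"
      using U dist_triangle[of y z x] dist_commute[of x y] by auto
  qed (use assms in simp)
qed

lemma uniform_Stone_iff_Delta_u_pos:
  "uniform_Stone (X::'a::metric_space itself) \<longleftrightarrow> (\<forall>r>0. Delta_u X r > 0)"
proof (intro iffI allI impI)
  fix r :: real assume S: "uniform_Stone X" and r: "r > 0"
  let ?C = "cball_cover (r / 2) :: 'a set set"
  have "uniform_cover ?C"
    using r is_cover_cball_cover[of "r / 2"] lebesgue_number_cball_cover[of "r / 2"]
    by (auto simp: uniform_cover_def intro: less_le_trans[of 0 "ereal (r / 2)"])
  then obtain \<V> where V: "uniform_cover \<V>" "point_finite \<V>" "refines \<V> ?C"
    using S unfolding uniform_Stone_def by blast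
  have "cover_diam ?C \<le> ereal r"
    using cover_diam_cball_cover[of "r / 2"] r by simp
  then have "cover_diam \<V> \<le> ereal r"
    using cover_diam_mono_refines[OF V(3)] by (rule order_trans[rotated])
  then have "lebesgue_number \<V> \<le> Delta_u X r"
    unfolding Delta_u_def using V by (intro Sup_upper) (auto simp: uniform_cover_def)
  then show "Delta_u X r > 0"
    using V(1) by (auto simp: uniform_cover_def)
next
  assume D: "\<forall>r>0. Delta_u X r > 0"
  show "uniform_Stone X" unfolding uniform_Stone_def
  proof (intro allI impI)
    fix \<U> :: "'a set set" assume U: "uniform_cover \<U>"
    then obtain d where d: "0 < ereal d" "ereal d < lebesgue_number \<U>"
      by (meson ereal_dense2 uniform_cover_def)
    then have "Delta_u X d > 0" using D by simp
    then obtain \<V> :: "'a set set" where V: "is_cover \<V>" "point_finite \<V>"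
        "cover_diam \<V> \<le> ereal d" "lebesgue_number \<V> > 0"
      unfolding Delta_u_def by (auto simp: less_Sup_iff)
    have "refines \<V> \<U>"
      using V(3) d(2) by (intro refines_if_cover_diam_less_lebesgue_number) simp
    then show "\<exists>\<V>. uniform_cover \<V> \<and> point_finite \<V> \<and> refines \<V> \<U>"
      using V by (auto simp: uniform_cover_def)
  qed
qed

lemma coarse_Stone_iff_Delta_c_finite:
  "coarse_Stone (X::'a::metric_space itself) \<longleftrightarrow> (\<forall>R\<ge>0. Delta_c X R < \<infinity>)"
proof (intro iffI allI impI)
  fix R :: real assume S: "coarse_Stone X" and R: "R \<ge> 0"
  let ?C = "cball_cover R :: 'a set set"
  have "cover_diam ?C < \<infinity>"
    using cover_diam_cball_cover[OF R] by (rule le_less_trans) simp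
  then have "uniformly_bounded_cover ?C"
    using is_cover_cball_cover[OF R] by (simp add: uniformly_bounded_cover_def)
  then obtain \<V> where V: "uniformly_bounded_cover \<V>" "point_finite \<V>" "refines ?C \<V>"
    using S unfolding coarse_Stone_def by blast
  have "ereal R \<le> lebesgue_number \<V>"
    using lebesgue_number_cball_cover[OF R] lebesgue_number_mono_refines[OF V(3)]
    by (rule order_trans)
  then have "Delta_c X R \<le> cover_diam \<V>"
    unfolding Delta_c_def using V by (intro Inf_lower) (auto simp: uniformly_bounded_cover_def)
  then show "Delta_c X R < \<infinity>"
    using V(1) by (auto simp: uniformly_bounded_cover_def)
next
  assume D: "\<forall>R\<ge>0. Delta_c X R < \<infinity>"
  show "coarse_Stone X" unfolding coarse_Stone_def
  proof (intro allI impI)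
    fix \<U> :: "'a set set" assume U: "uniformly_bounded_cover \<U>"
    then have "max 0 (cover_diam \<U>) < \<infinity>"
      by (simp add: uniformly_bounded_cover_def max_def)
    then obtain R where R: "max 0 (cover_diam \<U>) < ereal R"
      by (meson ereal_dense2)
    then have "Delta_c X R < \<infinity>" using D by simp
    then obtain \<V> :: "'a set set" where V: "is_cover \<V>" "point_finite \<V>"
        "ereal R \<le> lebesgue_number \<V>" "cover_diam \<V> < \<infinity>"
      unfolding Delta_c_def Inf_less_iff by blast
    have "cover_diam \<U> < ereal R" using R by simp
    then have "refines \<U> \<V>"
      using V(3) by (intro refines_if_cover_diam_less_lebesgue_number) (rule less_le_trans)
    then show "\<exists>\<V>. uniformly_bounded_cover \<V> \<and> point_finite \<V> \<and> refines \<U> \<V>"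
      using V by (auto simp: uniformly_bounded_cover_def)
  qed
qed

theorem proposition3p3:
  fixes X :: "'a::metric_space itself"
  shows "(uniform_Stone X \<longleftrightarrow> (\<forall>r>0. Delta_u X r > 0)) \<and>
         (coarse_Stone X \<longleftrightarrow> (\<forall>R\<ge>0. Delta_c X R < \<infinity>))"
  using uniform_Stone_iff_Delta_u_pos coarse_Stone_iff_Delta_c_finite by blast

end
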